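(* Let $X,Y$ be finite sets with $\max\{|X|,|Y|\}\le N<\infty$, $c\in\mathbb R_+^{X\times Y}$, and let $\mu\in\mathcal P(X)$, $\nu\in\mathcal P(Y)$ satisfy $\mu=r/M$, $\nu=s/M$ for a positive integer $M$ and vectors $r\in\mathbb Z_{++}^X$, $s\in\mathbb Z_{++}^Y$ of strictly positive integers. Let $\varepsilon_1>\varepsilon_2>0$ and let $(\alpha_a,\beta_a)$ be a maximizer of $J_{\varepsilon_a}$ for $a=1,2$. Set $\Delta\alpha=\alpha_2-\alpha_1$, $\Delta\beta=\beta_2-\beta_1$. Then $$\max\Delta\alpha-\min\Delta\alpha\le\varepsilon_1 N(4\log N+24\log M),\qquad\max\Delta\beta-\min\Delta\beta\le\varepsilon_1N(4\log N+24\log M).$$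
   Context: For $\varepsilon>0$, $K_\varepsilon(x,y)=\exp(-c(x,y)/\varepsilon)\mu(x)\nu(y)$ and the dual entropic optimal transport functional is $J_\varepsilon(\alpha,\beta)=\langle\alpha,\mu\rangle+\langle\beta,\nu\rangle-\varepsilon\sum_{x,y}K_\varepsilon(x,y)\big(\exp((\alpha(x)+\beta(y))/\varepsilon)-1\big)$ for $\alpha\in\mathbb R^X,\beta\in\mathbb R^Y$. $\max\Delta\alpha$ denotes the largest entry of the vector $\Delta\alpha$ (similarly $\min$). *)

theory Defs
  imports "HOL-Analysis.Analysis"
begin

text \<open>Finite sets X, Y are represented by finite types 'x, 'y. Vectors are functions.\<close>

definition Kmat :: "real \<Rightarrow> ('x \<Rightarrow> 'y \<Rightarrow> real) \<Rightarrow> ('x \<Rightarrow> real) \<Rightarrow> ('y \<Rightarrow> real) \<Rightarrow> 'x \<Rightarrow> 'y \<Rightarrow> real" where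
  "Kmat \<epsilon> c \<mu> \<nu> x y = exp (- c x y / \<epsilon>) * \<mu> x * \<nu> y"

definition Jdual :: "real \<Rightarrow> ('x::finite \<Rightarrow> 'y::finite \<Rightarrow> real) \<Rightarrow> ('x \<Rightarrow> real) \<Rightarrow> ('y \<Rightarrow> real)
                      \<Rightarrow> ('x \<Rightarrow> real) \<Rightarrow> ('y \<Rightarrow> real) \<Rightarrow> real" where
  "Jdual \<epsilon> c \<mu> \<nu> \<alpha> \<beta> =
     (\<Sum>x\<in>UNIV. \<alpha> x * \<mu> x) + (\<Sum>y\<in>UNIV. \<beta> y * \<nu> y)
     - \<epsilon> * (\<Sum>x\<in>UNIV. \<Sum>y\<in>UNIV. Kmat \<epsilon> c \<mu> \<nu> x y * (exp ((\<alpha> x + \<beta> y) / \<epsilon>) - 1))"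

definition is_maximizer_J :: "real \<Rightarrow> ('x::finite \<Rightarrow> 'y::finite \<Rightarrow> real) \<Rightarrow> ('x \<Rightarrow> real) \<Rightarrow> ('y \<Rightarrow> real)
                      \<Rightarrow> ('x \<Rightarrow> real) \<Rightarrow> ('y \<Rightarrow> real) \<Rightarrow> bool" where
  "is_maximizer_J \<epsilon> c \<mu> \<nu> \<alpha> \<beta> \<longleftrightarrow> (\<forall>\<alpha>' \<beta>'. Jdual \<epsilon> c \<mu> \<nu> \<alpha>' \<beta>' \<le> Jdual \<epsilon> c \<mu> \<nu> \<alpha> \<beta>)"

end

theory Submission
  imports Defs
begin

text \<open>
  By the first-order conditions, a maximizer of \<open>J\<^sub>\<epsilon>\<close> yields the Gibbs plan
  \<open>\<mu>(x) \<nu>(y) exp((\<alpha>(x) + \<beta>(y) - c(x,y))/\<epsilon>)\<close> with marginals \<open>\<mu>, \<nu>\<close>; since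
  \<open>\<nu> \<ge> 1/M\<close>, its exponent is at most \<open>\<epsilon> ln M\<close>. With \<open>u = \<Delta>\<alpha>\<close> and \<open>v = \<Delta>\<beta>\<close>, the exponents
  of the two plans differ by \<open>u(x) + v(y)\<close>. Take a gap \<open>a < b\<close> between consecutive values of
  \<open>u\<close> and \<open>-v\<close> together, and cut along \<open>S = {u \<ge> b}\<close>, \<open>T = {-v \<ge> b}\<close>: on \<open>S \<times> T\<^sup>c\<close> the
  difference is \<open>\<ge> b - a\<close>, on \<open>S\<^sup>c \<times> T\<close> it is \<open>\<le> a - b\<close>. Both plans carry the same net mass
  \<open>\<mu>(S) - \<nu>(T) \<in> \<int>/M\<close> across the cut. If it is nonzero, one plan puts mass \<open>\<ge> 1/M\<close> on a block
  where its exponent is \<open>\<le> \<epsilon> ln M - (b - a)\<close>; if it is zero, the two blocks have equal mass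
  in both plans, and comparing the largest exponents of the blocks does the job. Either way
  \<open>b - a \<le> (\<epsilon>\<^sub>1 + \<epsilon>\<^sub>2) ln M\<close>, and there are fewer than \<open>2N\<close> gaps.
\<close>

lemma sum_UNIV_split_Compl: "sum f (UNIV :: 'a::finite set) = sum f A + sum f (- A)"
  by (simp add: sum.subset_diff[of A UNIV] Compl_eq_Diff_UNIV add.commute)

lemma finite_ex_argmax:
  fixes f :: "'a \<Rightarrow> 'b::linorder"
  assumes "finite A" "A \<noteq> {}"
  shows "\<exists>a\<in>A. \<forall>b\<in>A. f b \<le> f a"
proof -
  have "Max (f ` A) \<in> f ` A"
    using assms by simp
  then obtain a where "a \<in> A" "f a = Max (f ` A)"
    by auto
  then show ?thesis using assms(1) by (metis Max_ge finite_imageI imageI)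
qed

lemma Max_range_diff_Min_range_le:
  fixes f :: "'a::finite \<Rightarrow> real"
  assumes "\<And>x x'. f x - f x' \<le> D"
  shows "Max (range f) - Min (range f) \<le> D"
proof -
  have "Max (range f) \<in> range f" "Min (range f) \<in> range f"
    by simp_all
  then obtain x x' where "Max (range f) = f x" "Min (range f) = f x'"
    by blast
  then show ?thesis using assms by simp
qed

lemma Max_diff_Min_le_card_mult_gap:
  fixes V :: "real set"
  assumes "finite V" "V \<noteq> {}"
    and "\<And>a b. a \<in> V \<Longrightarrow> b \<in> V \<Longrightarrow> a < b \<Longrightarrow> V \<inter> {a<..<b} = {} \<Longrightarrow> b - a \<le> G"
  shows "Max V - Min V \<le> real (card V - 1) * G"
  using assms
proof (induction "card V" arbitrary: V)
  case 0
  then show ?case by simp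
next
  case (Suc n)
  define m where "m = Max V"
  define V' where "V' = V - {m}"
  show ?case
  proof (cases "V' = {}")
    case True
    then have "V = {m}" using Suc.prems unfolding V'_def m_def by auto
    then show ?thesis by simp
  next
    case False
    have m: "m \<in> V" "\<And>z. z \<in> V \<Longrightarrow> z \<le> m"
      unfolding m_def using Suc.prems by auto
    have V': "finite V'" "card V' = n" "V' \<subseteq> V"
      unfolding V'_def using Suc m by auto
    define m' where "m' = Max V'"
    have m': "m' \<in> V'" "\<And>z. z \<in> V' \<Longrightarrow> z \<le> m'"
      unfolding m'_def using V'(1) False by auto
    have "m' < m"
      using m m' V'(3) unfolding V'_def by force
    have below_m: "z \<le> m'" if "z \<in> V" "z \<noteq> m" for z
      using that m'(2) unfolding V'_def by blast
    have "m - m' \<le> G"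
      using Suc.prems(3)[of m' m] m m' V'(3) \<open>m' < m\<close> below_m by fastforce
    moreover have "Max V' - Min V' \<le> real (card V' - 1) * G"
    proof (rule Suc.hyps(1)[OF V'(2)[symmetric] V'(1) False])
      fix a b assume "a \<in> V'" "b \<in> V'" "a < b" "V' \<inter> {a<..<b} = {}"
      moreover have "b \<le> m" using \<open>b \<in> V'\<close> V'(3) m(2) by blast
      then have "m \<notin> {a<..<b}" by simp
      ultimately show "b - a \<le> G"
        using Suc.prems(3)[of a b] V'(3) unfolding V'_def by blast
    qed
    moreover have "Min V \<in> V'"
      using Suc.prems(1,2) m'(1) V'(3) \<open>m' < m\<close> unfolding V'_def
      by (metis DiffI Min_in Min_le insert_iff not_le order.strict_trans1 singleton_iff subset_iff)
    then have "Min V' \<le> Min V" using V'(1) by simp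
    moreover have "n \<ge> 1"
      using V'(1,2) False by (metis card_0_eq less_one not_le)
    then have "real (card V - 1) = real (card V' - 1) + 1"
      using V'(2) Suc.hyps(2)[symmetric] by simp
    ultimately show ?thesis
      unfolding m_def m'_def by (simp add: algebra_simps)
  qed
qed

lemma Jdual_update_fst:
  "Jdual e c \<mu> \<nu> (\<alpha>(x := \<alpha> x + t)) \<beta> = Jdual e c \<mu> \<nu> \<alpha> \<beta> + t * \<mu> x
     - e * (exp (t / e) - 1) * (\<Sum>y\<in>UNIV. Kmat e c \<mu> \<nu> x y * exp ((\<alpha> x + \<beta> y) / e))"
proof -
  have row: "(\<Sum>y\<in>UNIV. Kmat e c \<mu> \<nu> x y * (exp ((\<alpha> x + t + \<beta> y) / e) - 1))
      = (\<Sum>y\<in>UNIV. Kmat e c \<mu> \<nu> x y * (exp ((\<alpha> x + \<beta> y) / e) - 1))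
        + (exp (t / e) - 1) * (\<Sum>y\<in>UNIV. Kmat e c \<mu> \<nu> x y * exp ((\<alpha> x + \<beta> y) / e))"
    unfolding sum_distrib_left sum.distrib[symmetric]
    by (rule sum.cong) (simp_all add: algebra_simps add_divide_distrib flip: exp_add)
  have "(\<Sum>x'\<in>UNIV. (\<alpha>(x := \<alpha> x + t)) x' * \<mu> x')
      = (\<Sum>x'\<in>UNIV. \<alpha> x' * \<mu> x' + (if x' = x then t * \<mu> x else 0))"
    by (rule sum.cong) (auto simp: algebra_simps)
  also have "\<dots> = (\<Sum>x'\<in>UNIV. \<alpha> x' * \<mu> x') + t * \<mu> x"
    by (simp add: sum.distrib)
  finally have lin: "(\<Sum>x'\<in>UNIV. (\<alpha>(x := \<alpha> x + t)) x' * \<mu> x') = (\<Sum>x'\<in>UNIV. \<alpha> x' * \<mu> x') + t * \<mu> x" .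
  have "(\<Sum>x'\<in>UNIV. \<Sum>y\<in>UNIV. Kmat e c \<mu> \<nu> x' y * (exp (((\<alpha>(x := \<alpha> x + t)) x' + \<beta> y) / e) - 1))
      = (\<Sum>x'\<in>UNIV. (\<Sum>y\<in>UNIV. Kmat e c \<mu> \<nu> x' y * (exp ((\<alpha> x' + \<beta> y) / e) - 1))
          + (if x' = x then (exp (t / e) - 1) * (\<Sum>y\<in>UNIV. Kmat e c \<mu> \<nu> x y * exp ((\<alpha> x + \<beta> y) / e)) else 0))"
    by (rule sum.cong) (auto simp: row)
  also have "\<dots> = (\<Sum>x'\<in>UNIV. \<Sum>y\<in>UNIV. Kmat e c \<mu> \<nu> x' y * (exp ((\<alpha> x' + \<beta> y) / e) - 1))
      + (exp (t / e) - 1) * (\<Sum>y\<in>UNIV. Kmat e c \<mu> \<nu> x y * exp ((\<alpha> x + \<beta> y) / e))"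
    by (simp add: sum.distrib)
  finally have exp_part: "(\<Sum>x'\<in>UNIV. \<Sum>y\<in>UNIV. Kmat e c \<mu> \<nu> x' y * (exp (((\<alpha>(x := \<alpha> x + t)) x' + \<beta> y) / e) - 1))
      = (\<Sum>x'\<in>UNIV. \<Sum>y\<in>UNIV. Kmat e c \<mu> \<nu> x' y * (exp ((\<alpha> x' + \<beta> y) / e) - 1))
      + (exp (t / e) - 1) * (\<Sum>y\<in>UNIV. Kmat e c \<mu> \<nu> x y * exp ((\<alpha> x + \<beta> y) / e))" .
  show ?thesis
    unfolding Jdual_def lin exp_part by (simp add: algebra_simps)
qed

lemma maximizer_row_marginal:
  assumes "is_maximizer_J e c \<mu> \<nu> \<alpha> \<beta>" and "e > 0"
  shows "(\<Sum>y\<in>UNIV. Kmat e c \<mu> \<nu> x y * exp ((\<alpha> x + \<beta> y) / e)) = \<mu> x"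
proof -
  define W where "W = (\<Sum>y\<in>UNIV. Kmat e c \<mu> \<nu> x y * exp ((\<alpha> x + \<beta> y) / e))"
  define f where "f t = t * \<mu> x - e * (exp (t / e) - 1) * W" for t
  have max_at_0: "\<forall>t. \<bar>0 - t\<bar> < 1 \<longrightarrow> f t \<le> f 0"
  proof (intro allI impI)
    fix t
    have "Jdual e c \<mu> \<nu> (\<alpha>(x := \<alpha> x + t)) \<beta> \<le> Jdual e c \<mu> \<nu> \<alpha> \<beta>"
      using assms(1) unfolding is_maximizer_J_def by blast
    then show "f t \<le> f 0" unfolding Jdual_update_fst f_def W_def by simp
  qed
  have "(f has_real_derivative \<mu> x - W) (at 0)"
    unfolding f_def using \<open>e > 0\<close> by (auto intro!: derivative_eq_intros)
  then have "\<mu> x - W = 0"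
    using zero_less_one max_at_0 by (rule DERIV_local_max)
  then show ?thesis unfolding W_def by simp
qed

definition gibbs_plan :: "real \<Rightarrow> ('x \<Rightarrow> real) \<Rightarrow> ('y \<Rightarrow> real) \<Rightarrow> ('x \<Rightarrow> 'y \<Rightarrow> real) \<Rightarrow> 'x \<Rightarrow> 'y \<Rightarrow> real" where
  "gibbs_plan e \<mu> \<nu> w x y = \<mu> x * \<nu> y * exp (w x y / e)"

definition has_marginals :: "('x::finite \<Rightarrow> 'y::finite \<Rightarrow> real) \<Rightarrow> ('x \<Rightarrow> real) \<Rightarrow> ('y \<Rightarrow> real) \<Rightarrow> bool" where
  "has_marginals \<pi> \<mu> \<nu> \<longleftrightarrow> (\<forall>x. (\<Sum>y\<in>UNIV. \<pi> x y) = \<mu> x) \<and> (\<forall>y. (\<Sum>x\<in>UNIV. \<pi> x y) = \<nu> y)"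

lemma Kmat_mult_exp:
  "Kmat e c \<mu> \<nu> x y * exp ((\<alpha> x + \<beta> y) / e) = gibbs_plan e \<mu> \<nu> (\<lambda>x y. \<alpha> x + \<beta> y - c x y) x y"
  unfolding Kmat_def gibbs_plan_def by (simp add: diff_divide_distrib exp_diff exp_minus field_simps)

lemma Jdual_transpose:
  "Jdual e c \<mu> \<nu> \<alpha> \<beta> = Jdual e (\<lambda>y x. c x y) \<nu> \<mu> \<beta> \<alpha>"
  unfolding Jdual_def Kmat_def by (subst sum.swap) (simp add: algebra_simps)

lemma maximizer_has_marginals:
  assumes "is_maximizer_J e c \<mu> \<nu> \<alpha> \<beta>" and "e > 0"
  shows "has_marginals (gibbs_plan e \<mu> \<nu> (\<lambda>x y. \<alpha> x + \<beta> y - c x y)) \<mu> \<nu>"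
proof -
  have "is_maximizer_J e (\<lambda>y x. c x y) \<nu> \<mu> \<beta> \<alpha>"
    using assms(1) unfolding is_maximizer_J_def by (metis Jdual_transpose)
  from maximizer_row_marginal[OF this \<open>e > 0\<close>] maximizer_row_marginal[OF assms]
  show ?thesis
    unfolding has_marginals_def Kmat_mult_exp[symmetric]
    by (simp add: Kmat_def algebra_simps)
qed

lemma has_marginals_cut_balance:
  assumes "has_marginals \<pi> \<mu> \<nu>"
  shows "(\<Sum>x\<in>S. \<Sum>y\<in>-T. \<pi> x y) - (\<Sum>x\<in>-S. \<Sum>y\<in>T. \<pi> x y) = sum \<mu> S - sum \<nu> T"
proof -
  have "sum \<mu> S = (\<Sum>x\<in>S. (\<Sum>y\<in>T. \<pi> x y) + (\<Sum>y\<in>-T. \<pi> x y))"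
    using assms unfolding has_marginals_def sum_UNIV_split_Compl[of _ T] by simp
  moreover have "sum \<nu> T = (\<Sum>y\<in>T. (\<Sum>x\<in>S. \<pi> x y) + (\<Sum>x\<in>-S. \<pi> x y))"
    using assms unfolding has_marginals_def sum_UNIV_split_Compl[of _ S] by simp
  ultimately show ?thesis
    by (simp add: sum.distrib sum.swap[of _ T])
qed

definition lattice_prob :: "nat \<Rightarrow> ('a::finite \<Rightarrow> real) \<Rightarrow> bool" where
  "lattice_prob M \<mu> \<longleftrightarrow> M > 0 \<and> sum \<mu> UNIV = 1 \<and> (\<forall>x. \<exists>r::int. r > 0 \<and> \<mu> x = r / M)"

lemma lattice_prob_ge:
  assumes "lattice_prob M \<mu>"
  shows "\<mu> x \<ge> 1 / real M"
proof -
  obtain r :: int where "r > 0" "\<mu> x = r / M"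
    using assms unfolding lattice_prob_def by blast
  then show ?thesis by (simp add: divide_right_mono)
qed

lemma lattice_prob_pos:
  assumes "lattice_prob M \<mu>"
  shows "\<mu> x > 0"
proof -
  have "0 < 1 / real M" using assms unfolding lattice_prob_def by simp
  then show ?thesis using lattice_prob_ge[OF assms] by (rule less_le_trans)
qed

lemma lattice_prob_sum:
  assumes "lattice_prob M \<mu>"
  obtains k :: int where "sum \<mu> A = k / M"
proof -
  obtain r :: "'a \<Rightarrow> int" where "\<And>x. \<mu> x = r x / M"
    using assms unfolding lattice_prob_def by metis
  then have "sum \<mu> A = (\<Sum>x\<in>A. r x) / M"
    by (simp add: sum_divide_distrib)
  then show ?thesis using that[of "\<Sum>x\<in>A. r x"] by simp
qed

lemma gibbs_potential_le_ln:
  assumes "has_marginals (gibbs_plan e \<mu> \<nu> w) \<mu> \<nu>" "e > 0" "lattice_prob M \<mu>" "lattice_prob M \<nu>"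
  shows "w x y \<le> e * ln (real M)"
proof -
  have M: "real M > 0" using assms(3) unfolding lattice_prob_def by simp
  have "gibbs_plan e \<mu> \<nu> w x y \<le> (\<Sum>y\<in>UNIV. gibbs_plan e \<mu> \<nu> w x y)"
    using lattice_prob_pos[OF assms(3)] lattice_prob_pos[OF assms(4)]
    by (intro member_le_sum) (simp_all add: gibbs_plan_def less_imp_le)
  also have "\<dots> = \<mu> x * 1"
    using assms(1) unfolding has_marginals_def by simp
  finally have le1: "\<nu> y * exp (w x y / e) \<le> 1"
    using lattice_prob_pos[OF assms(3)] unfolding gibbs_plan_def mult.assoc by (rule mult_left_le_imp_le)
  have "exp (w x y / e) / real M \<le> \<nu> y * exp (w x y / e)"
    using mult_right_mono[OF lattice_prob_ge[OF assms(4)] exp_ge_zero] by simp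
  then have "exp (w x y / e) / real M \<le> 1" using le1 by linarith
  then have "exp (w x y / e) \<le> real M"
    using M by (simp add: divide_le_eq)
  then have "w x y / e \<le> ln (real M)"
    using M by (simp add: ln_ge_iff)
  then show ?thesis using \<open>e > 0\<close> by (simp add: field_simps)
qed

lemma gibbs_region_mass_le:
  assumes "lattice_prob M \<mu>" "lattice_prob M \<nu>" "e > 0"
    and "\<And>x y. x \<in> A \<Longrightarrow> y \<in> B \<Longrightarrow> w x y \<le> L"
  shows "(\<Sum>x\<in>A. \<Sum>y\<in>B. gibbs_plan e \<mu> \<nu> w x y) \<le> exp (L / e)"
proof -
  have \<mu>0: "\<mu> x \<ge> 0" and \<nu>0: "\<nu> y \<ge> 0" for x y
    using lattice_prob_pos[OF assms(1)] lattice_prob_pos[OF assms(2)] less_imp_le by blast+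
  have "sum \<mu> A \<le> 1" "sum \<nu> B \<le> 1"
    using assms(1,2) \<mu>0 \<nu>0 unfolding lattice_prob_def by (metis finite sum_mono2 subset_UNIV)+
  moreover have "sum \<mu> A \<ge> 0" "sum \<nu> B \<ge> 0"
    using \<mu>0 \<nu>0 by (simp_all add: sum_nonneg)
  ultimately have "exp (L / e) * (sum \<mu> A * sum \<nu> B) \<le> exp (L / e)"
    by (simp add: mult_le_one)
  moreover have "(\<Sum>x\<in>A. \<Sum>y\<in>B. gibbs_plan e \<mu> \<nu> w x y) \<le> (\<Sum>x\<in>A. \<Sum>y\<in>B. \<mu> x * \<nu> y * exp (L / e))"
    unfolding gibbs_plan_def using assms(3,4) \<mu>0 \<nu>0
    by (intro sum_mono mult_left_mono) (simp_all add: divide_right_mono)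
  moreover have "(\<Sum>x\<in>A. \<Sum>y\<in>B. \<mu> x * \<nu> y * exp (L / e)) = exp (L / e) * (sum \<mu> A * sum \<nu> B)"
    by (simp add: sum_product sum_distrib_left mult_ac) (rule sum.swap)
  ultimately show ?thesis by linarith
qed

lemma neg_ln_le_of_gibbs_region_mass_ge:
  assumes "lattice_prob M \<mu>" "lattice_prob M \<nu>" "e > 0"
    and "\<And>x y. x \<in> A \<Longrightarrow> y \<in> B \<Longrightarrow> w x y \<le> L"
    and "1 / real M \<le> (\<Sum>x\<in>A. \<Sum>y\<in>B. gibbs_plan e \<mu> \<nu> w x y)"
  shows "- (e * ln (real M)) \<le> L"
proof -
  have M: "real M > 0" using assms(1) unfolding lattice_prob_def by simp
  have "(\<Sum>x\<in>A. \<Sum>y\<in>B. gibbs_plan e \<mu> \<nu> w x y) \<le> exp (L / e)"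
    using assms(1-4) by (rule gibbs_region_mass_le)
  then have "1 / real M \<le> exp (L / e)"
    using assms(5) by linarith
  then have "exp (- ln (real M)) \<le> exp (L / e)"
    using M by (simp add: exp_minus inverse_eq_divide)
  then have "- ln (real M) \<le> L / e"
    by simp
  then show ?thesis using \<open>e > 0\<close> by (simp add: field_simps)
qed

lemma gibbs_potential_le_of_region_mass_le:
  assumes "lattice_prob M \<mu>" "lattice_prob M \<nu>" "e > 0" "x \<in> A" "y \<in> B"
    and "(\<Sum>x\<in>A. \<Sum>y\<in>B. gibbs_plan e \<mu> \<nu> w x y) \<le> exp (L / e)"
  shows "w x y \<le> L + 2 * e * ln (real M)"
proof -
  have M: "real M > 0" using assms(1) unfolding lattice_prob_def by simp
  have nonneg: "gibbs_plan e \<mu> \<nu> w x' y' \<ge> 0" for x' y'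
    using lattice_prob_pos[OF assms(1)] lattice_prob_pos[OF assms(2)]
    by (simp add: gibbs_plan_def less_imp_le)
  have "gibbs_plan e \<mu> \<nu> w x y \<le> (\<Sum>y\<in>B. gibbs_plan e \<mu> \<nu> w x y)"
    using assms(5) nonneg by (intro member_le_sum) auto
  also have "\<dots> \<le> (\<Sum>x\<in>A. \<Sum>y\<in>B. gibbs_plan e \<mu> \<nu> w x y)"
    using assms(4) nonneg by (intro member_le_sum[where f = "\<lambda>x. \<Sum>y\<in>B. _ x y"] sum_nonneg) auto
  finally have entry: "gibbs_plan e \<mu> \<nu> w x y \<le> exp (L / e)" using assms(6) by linarith
  have "1 / real M * (1 / real M) \<le> \<mu> x * \<nu> y"
    using lattice_prob_ge[OF assms(1)] lattice_prob_ge[OF assms(2)] lattice_prob_pos[OF assms(1)] M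
    by (intro mult_mono) (auto simp: less_imp_le)
  from mult_right_mono[OF this exp_ge_zero]
  have "exp (w x y / e) / (real M * real M) \<le> \<mu> x * \<nu> y * exp (w x y / e)"
    by simp
  then have "exp (w x y / e) / (real M * real M) \<le> exp (L / e)"
    using entry unfolding gibbs_plan_def by linarith
  then have "exp (w x y / e) \<le> exp (L / e) * (real M * real M)"
    using M by (simp only: pos_divide_le_eq mult_pos_pos)
  also have "\<dots> = exp (L / e + 2 * ln (real M))"
    using M by (simp only: exp_add mult_2 exp_ln)
  finally have "w x y / e \<le> L / e + 2 * ln (real M)"
    by simp
  then show ?thesis using \<open>e > 0\<close> by (simp add: field_simps)
qed

lemma gibbs_region_mass_pos:
  assumes "lattice_prob M \<mu>" "lattice_prob M \<nu>" "A \<times> B \<noteq> {}"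
  shows "(\<Sum>x\<in>A. \<Sum>y\<in>B. gibbs_plan e \<mu> \<nu> w x y) > 0"
  using assms lattice_prob_pos[OF assms(1)] lattice_prob_pos[OF assms(2)]
  by (intro sum_pos) (auto simp: gibbs_plan_def)

lemma balanced_cut_gap_le:
  assumes \<mu>: "lattice_prob M \<mu>" and \<nu>: "lattice_prob M \<nu>" and e: "e1 > 0" "e2 > 0"
    and up: "\<And>x y. x \<in> S \<Longrightarrow> y \<in> -T \<Longrightarrow> g \<le> w2 x y - w1 x y"
    and down: "\<And>x y. x \<in> -S \<Longrightarrow> y \<in> T \<Longrightarrow> w2 x y - w1 x y \<le> - g"
    and ne: "S \<times> -T \<noteq> {}" "(- S) \<times> T \<noteq> {}"
    and balanced1: "(\<Sum>x\<in>S. \<Sum>y\<in>-T. gibbs_plan e1 \<mu> \<nu> w1 x y) = (\<Sum>x\<in>-S. \<Sum>y\<in>T. gibbs_plan e1 \<mu> \<nu> w1 x y)"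
    and balanced2: "(\<Sum>x\<in>S. \<Sum>y\<in>-T. gibbs_plan e2 \<mu> \<nu> w2 x y) = (\<Sum>x\<in>-S. \<Sum>y\<in>T. gibbs_plan e2 \<mu> \<nu> w2 x y)"
  shows "g \<le> (e1 + e2) * ln (real M)"
proof -
  obtain x1 y1 where xy1: "x1 \<in> S" "y1 \<in> -T"
    and max1: "\<And>x y. x \<in> S \<Longrightarrow> y \<in> -T \<Longrightarrow> w1 x y \<le> w1 x1 y1"
    using finite_ex_argmax[OF finite ne(1), of "case_prod w1"] by auto
  obtain x2 y2 where xy2: "x2 \<in> -S" "y2 \<in> T"
    and max2: "\<And>x y. x \<in> -S \<Longrightarrow> y \<in> T \<Longrightarrow> w2 x y \<le> w2 x2 y2"
    using finite_ex_argmax[OF finite ne(2), of "case_prod w2"] by auto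
  have "(\<Sum>x\<in>S. \<Sum>y\<in>-T. gibbs_plan e2 \<mu> \<nu> w2 x y) \<le> exp (w2 x2 y2 / e2)"
    unfolding balanced2 using max2 by (intro gibbs_region_mass_le[OF \<mu> \<nu> e(2)])
  then have "w2 x1 y1 \<le> w2 x2 y2 + 2 * e2 * ln (real M)"
    by (rule gibbs_potential_le_of_region_mass_le[OF \<mu> \<nu> e(2) xy1])
  moreover have "(\<Sum>x\<in>-S. \<Sum>y\<in>T. gibbs_plan e1 \<mu> \<nu> w1 x y) \<le> exp (w1 x1 y1 / e1)"
    unfolding balanced1[symmetric] using max1 by (intro gibbs_region_mass_le[OF \<mu> \<nu> e(1)])
  then have "w1 x2 y2 \<le> w1 x1 y1 + 2 * e1 * ln (real M)"
    by (rule gibbs_potential_le_of_region_mass_le[OF \<mu> \<nu> e(1) xy2])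
  ultimately show ?thesis
    using up[OF xy1] down[OF xy2] by (simp add: algebra_simps)
qed

lemma cut_gap_le:
  assumes \<mu>: "lattice_prob M \<mu>" and \<nu>: "lattice_prob M \<nu>" and e: "e1 > 0" "e2 > 0"
    and marg1: "has_marginals (gibbs_plan e1 \<mu> \<nu> w1) \<mu> \<nu>"
    and marg2: "has_marginals (gibbs_plan e2 \<mu> \<nu> w2) \<mu> \<nu>"
    and up: "\<And>x y. x \<in> S \<Longrightarrow> y \<in> -T \<Longrightarrow> g \<le> w2 x y - w1 x y"
    and down: "\<And>x y. x \<in> -S \<Longrightarrow> y \<in> T \<Longrightarrow> w2 x y - w1 x y \<le> - g"
    and nontrivial: "S \<times> -T \<noteq> {} \<or> (- S) \<times> T \<noteq> {}"
  shows "g \<le> (e1 + e2) * ln (real M)"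
proof -
  define P where "P e w = (\<Sum>x\<in>S. \<Sum>y\<in>-T. gibbs_plan e \<mu> \<nu> w x y)" for e w
  define Q where "Q e w = (\<Sum>x\<in>-S. \<Sum>y\<in>T. gibbs_plan e \<mu> \<nu> w x y)" for e w
  obtain k :: int where k: "sum \<mu> S - sum \<nu> T = k / M"
    using lattice_prob_sum[OF \<mu>, of S] lattice_prob_sum[OF \<nu>, of T] by (metis diff_divide_distrib of_int_diff)
  have balance1: "P e1 w1 - Q e1 w1 = k / M" and balance2: "P e2 w2 - Q e2 w2 = k / M"
    unfolding P_def Q_def k[symmetric] using marg1 marg2 by (simp_all add: has_marginals_cut_balance)
  have nonneg: "P e w \<ge> 0" "Q e w \<ge> 0" for e w
    unfolding P_def Q_def gibbs_plan_def
    using lattice_prob_pos[OF \<mu>] lattice_prob_pos[OF \<nu>]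
    by (auto intro!: sum_nonneg mult_nonneg_nonneg simp: less_imp_le)
  have w1_le: "w1 x y \<le> e1 * ln (real M)" and w2_le: "w2 x y \<le> e2 * ln (real M)" for x y
    using gibbs_potential_le_ln[OF marg1 e(1) \<mu> \<nu>] gibbs_potential_le_ln[OF marg2 e(2) \<mu> \<nu>] by blast+
  consider "k \<ge> 1" | "k \<le> -1" | "k = 0" by linarith
  then show ?thesis
  proof cases
    case 1
    then have "1 / real M \<le> k / M"
      by (simp add: divide_right_mono)
    then have "1 / real M \<le> P e1 w1"
      using balance1 nonneg(2)[of e1 w1] by linarith
    moreover have "w1 x y \<le> e2 * ln (real M) - g" if "x \<in> S" "y \<in> -T" for x y
      using up[OF that] w2_le[of x y] by linarith
    ultimately have "- (e1 * ln (real M)) \<le> e2 * ln (real M) - g"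
      unfolding P_def by (intro neg_ln_le_of_gibbs_region_mass_ge[OF \<mu> \<nu> e(1)])
    then show ?thesis by (simp add: algebra_simps)
  next
    case 2
    then have "1 / real M \<le> - (k / M)"
      using divide_right_mono[of 1 "of_int (- k)" "real M"] by simp
    then have "1 / real M \<le> Q e2 w2"
      using balance2 nonneg(1)[of e2 w2] by linarith
    moreover have "w2 x y \<le> e1 * ln (real M) - g" if "x \<in> -S" "y \<in> T" for x y
      using down[OF that] w1_le[of x y] by linarith
    ultimately have "- (e2 * ln (real M)) \<le> e1 * ln (real M) - g"
      unfolding Q_def by (intro neg_ln_le_of_gibbs_region_mass_ge[OF \<mu> \<nu> e(2)])
    then show ?thesis by (simp add: algebra_simps)
  next
    case 3
    then have "P e1 w1 = Q e1 w1" "P e2 w2 = Q e2 w2"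
      using balance1 balance2 by simp_all
    moreover have "P e1 w1 > 0 \<or> Q e1 w1 > 0"
      using nontrivial unfolding P_def Q_def by (auto intro: gibbs_region_mass_pos[OF \<mu> \<nu>])
    ultimately have "Q e1 w1 > 0 \<and> P e1 w1 > 0" by auto
    then have "S \<times> -T \<noteq> {}" "(- S) \<times> T \<noteq> {}"
      unfolding P_def Q_def by auto
    with \<open>P e1 w1 = Q e1 w1\<close> \<open>P e2 w2 = Q e2 w2\<close> show ?thesis
      unfolding P_def Q_def by (intro balanced_cut_gap_le[OF \<mu> \<nu> e up down])
  qed
qed

lemma potential_gap_le:
  fixes u :: "'x::finite \<Rightarrow> real" and v :: "'y::finite \<Rightarrow> real"
  defines "V \<equiv> range u \<union> range (\<lambda>y. - v y)"
  assumes \<mu>: "lattice_prob M \<mu>" and \<nu>: "lattice_prob M \<nu>" and e: "e1 > 0" "e2 > 0"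
    and marg1: "has_marginals (gibbs_plan e1 \<mu> \<nu> w1) \<mu> \<nu>"
    and marg2: "has_marginals (gibbs_plan e2 \<mu> \<nu> w2) \<mu> \<nu>"
    and diff: "\<And>x y. w2 x y - w1 x y = u x + v y"
    and ab: "a \<in> V" "b \<in> V" "a < b" "V \<inter> {a<..<b} = {}"
  shows "b - a \<le> (e1 + e2) * ln (real M)"
proof (rule cut_gap_le[OF \<mu> \<nu> e marg1 marg2])
  define S where "S = {x. b \<le> u x}"
  define T where "T = {y. b \<le> - v y}"
  have u_below: "u x \<le> a" if "x \<in> -S" for x
  proof -
    have "u x \<notin> {a<..<b}" using ab(4) unfolding V_def by blast
    then show ?thesis using that unfolding S_def by auto
  qed
  have v_below: "- v y \<le> a" if "y \<in> -T" for y
  proof -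
    have "- v y \<notin> {a<..<b}" using ab(4) unfolding V_def by blast
    then show ?thesis using that unfolding T_def by auto
  qed
  show "b - a \<le> w2 x y - w1 x y" if "x \<in> S" "y \<in> -T" for x y
    using that v_below[of y] diff[of x y] unfolding S_def by simp
  show "w2 x y - w1 x y \<le> - (b - a)" if "x \<in> -S" "y \<in> T" for x y
    using that u_below[of x] diff[of x y] unfolding T_def by simp
  have "(\<exists>x. x \<in> S) \<or> (\<exists>y. y \<in> T)"
    using ab(2) unfolding S_def T_def V_def by auto
  moreover have "(\<exists>x. x \<notin> S) \<or> (\<exists>y. y \<notin> T)"
    using ab(1,3) unfolding S_def T_def V_def by (auto simp: not_le)
  ultimately show "S \<times> -T \<noteq> {} \<or> (- S) \<times> T \<noteq> {}"
    by auto
qed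

lemma card_spread_le:
  fixes u :: "'x::finite \<Rightarrow> real" and v :: "'y::finite \<Rightarrow> real"
  assumes "max CARD('x) CARD('y) \<le> N" "M > 0" "e2 < e1" "0 < e2"
  shows "real (card (range u \<union> range v) - 1) * ((e1 + e2) * ln (real M))
     \<le> e1 * real N * (4 * ln (real N) + 24 * ln (real M))"
proof -
  have "card (range u \<union> range v) \<le> CARD('x) + CARD('y)"
    using card_Un_le[of "range u" "range v"] card_image_le[of UNIV u] card_image_le[of UNIV v] by simp
  then have card: "real (card (range u \<union> range v) - 1) \<le> 2 * real N"
    using assms(1) by linarith
  have "CARD('x) \<ge> 1" by (simp add: Suc_leI)
  then have "N \<ge> 1" using assms(1) by linarith
  then have "ln (real N) \<ge> 0" by simp
  have "ln (real M) \<ge> 0" using assms(2) by simp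
  have "real (card (range u \<union> range v) - 1) * ((e1 + e2) * ln (real M)) \<le> (2 * real N) * (2 * e1 * ln (real M))"
    using card assms(3,4) \<open>ln (real M) \<ge> 0\<close> by (intro mult_mono mult_right_mono) auto
  also have "\<dots> \<le> e1 * real N * (4 * ln (real N) + 24 * ln (real M))"
  proof -
    have "4 * ln (real M) \<le> 4 * ln (real N) + 24 * ln (real M)"
      using \<open>ln (real N) \<ge> 0\<close> \<open>ln (real M) \<ge> 0\<close> by linarith
    then have "e1 * real N * (4 * ln (real M)) \<le> e1 * real N * (4 * ln (real N) + 24 * ln (real M))"
      using assms(3,4) by (intro mult_left_mono) auto
    then show ?thesis by (simp add: algebra_simps)
  qed
  finally show ?thesis .
qed

theorem mainTheorem6:
  fixes c :: "'x::finite \<Rightarrow> 'y::finite \<Rightarrow> real"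
    and \<mu> :: "'x \<Rightarrow> real" and \<nu> :: "'y \<Rightarrow> real"
    and r :: "'x \<Rightarrow> int" and s :: "'y \<Rightarrow> int"
    and M N :: nat and \<epsilon>1 \<epsilon>2 :: real
    and \<alpha>1 \<alpha>2 :: "'x \<Rightarrow> real" and \<beta>1 \<beta>2 :: "'y \<Rightarrow> real"
  assumes N: "max (CARD('x)) (CARD('y)) \<le> N"
    and c_nonneg: "\<And>x y. c x y \<ge> 0"
    and M_pos: "M > 0"
    and r_pos: "\<And>x. r x > 0" and s_pos: "\<And>y. s y > 0"
    and mu_def: "\<And>x. \<mu> x = real_of_int (r x) / real M"
    and nu_def: "\<And>y. \<nu> y = real_of_int (s y) / real M"
    and mu_prob: "(\<Sum>x\<in>UNIV. \<mu> x) = 1"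
    and nu_prob: "(\<Sum>y\<in>UNIV. \<nu> y) = 1"
    and eps: "\<epsilon>1 > \<epsilon>2" "\<epsilon>2 > 0"
    and max1: "is_maximizer_J \<epsilon>1 c \<mu> \<nu> \<alpha>1 \<beta>1"
    and max2: "is_maximizer_J \<epsilon>2 c \<mu> \<nu> \<alpha>2 \<beta>2"
  shows "Max (range (\<lambda>x. \<alpha>2 x - \<alpha>1 x)) - Min (range (\<lambda>x. \<alpha>2 x - \<alpha>1 x))
           \<le> \<epsilon>1 * real N * (4 * ln (real N) + 24 * ln (real M))
       \<and> Max (range (\<lambda>y. \<beta>2 y - \<beta>1 y)) - Min (range (\<lambda>y. \<beta>2 y - \<beta>1 y))
           \<le> \<epsilon>1 * real N * (4 * ln (real N) + 24 * ln (real M))"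
proof -
  have \<mu>: "lattice_prob M \<mu>" and \<nu>: "lattice_prob M \<nu>"
    unfolding lattice_prob_def using M_pos mu_prob nu_prob mu_def nu_def r_pos s_pos by blast+
  define V where "V = range (\<lambda>x. \<alpha>2 x - \<alpha>1 x) \<union> range (\<lambda>y. - (\<beta>2 y - \<beta>1 y))"
  have "Max V - Min V \<le> real (card V - 1) * ((\<epsilon>1 + \<epsilon>2) * ln (real M))"
  proof (rule Max_diff_Min_le_card_mult_gap)
    fix a b assume "a \<in> V" "b \<in> V" "a < b" "V \<inter> {a<..<b} = {}"
    then show "b - a \<le> (\<epsilon>1 + \<epsilon>2) * ln (real M)"
      unfolding V_def
      by (intro potential_gap_le[OF \<mu> \<nu> _ eps(2) maximizer_has_marginals[OF max1] maximizer_has_marginals[OF max2]])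
         (use eps in auto)
  qed (simp_all add: V_def)
  also have "\<dots> \<le> \<epsilon>1 * real N * (4 * ln (real N) + 24 * ln (real M))"
    using card_spread_le[OF N M_pos eps] unfolding V_def .
  finally have spread: "Max V - Min V \<le> \<epsilon>1 * real N * (4 * ln (real N) + 24 * ln (real M))" .
  have within_V: "p - q \<le> Max V - Min V" if "p \<in> V" "q \<in> V" for p q
    using that by (simp add: V_def diff_mono)
  have "(\<alpha>2 x - \<alpha>1 x) - (\<alpha>2 x' - \<alpha>1 x') \<le> Max V - Min V" for x x'
    by (rule within_V) (simp_all add: V_def)
  moreover have "(\<beta>2 y - \<beta>1 y) - (\<beta>2 y' - \<beta>1 y') \<le> Max V - Min V" for y y'
    using within_V[of "- (\<beta>2 y' - \<beta>1 y')" "- (\<beta>2 y - \<beta>1 y)"] by (simp add: V_def)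
  ultimately show ?thesis
    using spread by (meson Max_range_diff_Min_range_le order_trans)
qed

end
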